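(* Let $\lambda>0$, $\gamma>0$, $\beta\ge 0$. Let $X$ be the Banach space of bounded analytic functions $h:[0,\lambda]\to\mathbb{R}$ with the supremum norm, $K=\{h\in X: h\ge 0,\ \|h\|_\infty\le 1\}$, and for $h\in K$ let $\Psi_h=1+\beta h$, $$D_h=\gamma\left(1+\gamma\int_0^\lambda\frac{\exp\left(-2\int_0^x\frac{\xi}{\Psi_h(\xi)}d\xi\right)}{\Psi_h(x)}\,dx\right)^{-1},$$ and $$(\tau h)(\eta)=D_h\left(\frac1\gamma+\int_0^\eta\frac{\exp\left(-2\int_0^x\frac{\xi}{\Psi_h(\xi)}d\xi\right)}{\Psi_h(x)}\,dx\right),\quad 0<\eta<\lambda.$$ Then $\tau(K)\subset K$. *)

theory Defs
  imports "HOL-Analysis.Analysis"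
begin

definition real_analytic_on :: "(real \<Rightarrow> real) \<Rightarrow> real set \<Rightarrow> bool" where
  "real_analytic_on h S \<longleftrightarrow>
     (\<forall>x\<in>S. \<exists>r>0. \<exists>a::nat \<Rightarrow> real.
        \<forall>y\<in>S. \<bar>y - x\<bar> < r \<longrightarrow> (\<lambda>n. a n * (y - x) ^ n) sums h y)"

definition X_space :: "real \<Rightarrow> (real \<Rightarrow> real) set" where
  "X_space lam = {h. real_analytic_on h {0..lam} \<and> (\<exists>B. \<forall>x\<in>{0..lam}. \<bar>h x\<bar> \<le> B)}"

definition K_set :: "real \<Rightarrow> (real \<Rightarrow> real) set" where
  "K_set lam = {h \<in> X_space lam. (\<forall>x\<in>{0..lam}. h x \<ge> 0) \<and> (\<forall>x\<in>{0..lam}. \<bar>h x\<bar> \<le> 1)}"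

definition Psi :: "real \<Rightarrow> (real \<Rightarrow> real) \<Rightarrow> real \<Rightarrow> real" where
  "Psi beta h = (\<lambda>\<xi>. 1 + beta * h \<xi>)"

definition weight :: "real \<Rightarrow> (real \<Rightarrow> real) \<Rightarrow> real \<Rightarrow> real" where
  "weight beta h x = exp (- 2 * integral {0..x} (\<lambda>\<xi>. \<xi> / Psi beta h \<xi>)) / Psi beta h x"

definition D_h :: "real \<Rightarrow> real \<Rightarrow> real \<Rightarrow> (real \<Rightarrow> real) \<Rightarrow> real" where
  "D_h lam gam beta h = gam * inverse (1 + gam * integral {0..lam} (weight beta h))"

definition tau :: "real \<Rightarrow> real \<Rightarrow> real \<Rightarrow> (real \<Rightarrow> real) \<Rightarrow> (real \<Rightarrow> real)" where
  "tau lam gam beta h = (\<lambda>\<eta>. D_h lam gam beta h * (1 / gam + integral {0..\<eta>} (weight beta h)))"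

end

theory Submission
  imports Defs "HOL-Complex_Analysis.Complex_Analysis"
begin

(* The content is that tau h inherits analyticity from h; the bounds are elementary.
   A real-analytic h on [0, lam] extends, by its local power series glued with the identity
   theorem, to a holomorphic F near the segment, and 1 + beta F has no zeros close to it since
   Psi_h >= 1 there. On a convex open neighbourhood of the segment holomorphic functions have
   primitives, so first exp (-2 int xi / Psi_h) / Psi_h and then its integral extend
   holomorphically, which makes tau h real analytic. As the weight is nonnegative, tau h
   increases from D_h / gam > 0 to tau h lam = 1. *)

lemma real_analytic_on_if_holomorphic:
  fixes T :: "complex \<Rightarrow> complex"
  assumes "open V" "T holomorphic_on V"
    and "\<And>y. y \<in> S \<Longrightarrow> complex_of_real y \<in> V \<and> T (of_real y) = of_real (f y)"
  shows "real_analytic_on f S"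
  unfolding real_analytic_on_def
proof
  fix x assume x: "x \<in> S"
  then obtain r where r: "r > 0" "ball (complex_of_real x) r \<subseteq> V"
    using assms(1,3) openE by blast
  define a where "a n = Re ((deriv ^^ n) T (of_real x) / fact n)" for n
  have "(\<lambda>n. a n * (y - x) ^ n) sums f y" if y: "y \<in> S" "\<bar>y - x\<bar> < r" for y
  proof -
    have "of_real y \<in> ball (complex_of_real x) r"
      using y by (simp add: dist_norm flip: of_real_diff)
    then have "(\<lambda>n. (deriv ^^ n) T (of_real x) / fact n * of_real ((y - x) ^ n)) sums T (of_real y)"
      using holomorphic_power_series[OF holomorphic_on_subset[OF assms(2) r(2)]] by simp
    moreover have Re_mult: "Re (w * of_real s) = Re w * s" for w s
      by simp
    ultimately have "(\<lambda>n. a n * (y - x) ^ n) sums Re (T (of_real y))"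
      unfolding a_def by (subst Re_mult[symmetric]) (rule sums_Re)
    then show ?thesis using assms(3)[OF y(1)] by simp
  qed
  with r show "\<exists>r>0. \<exists>a. \<forall>y\<in>S. \<bar>y - x\<bar> < r \<longrightarrow> (\<lambda>n. a n * (y - x) ^ n) sums f y" by blast
qed

lemma real_powser_holomorphic_extension:
  fixes c :: "nat \<Rightarrow> real"
  assumes x: "x \<in> {a..b}" and \<rho>: "0 < \<rho>" "\<rho> \<le> r" "2 * \<rho> \<le> b - a"
    and f: "\<And>y. y \<in> {a..b} \<Longrightarrow> \<bar>y - x\<bar> < r \<Longrightarrow> (\<lambda>n. c n * (y - x) ^ n) sums f y"
  obtains g :: "complex \<Rightarrow> complex" where "g holomorphic_on ball (of_real x) \<rho>"
    "\<And>y. y \<in> {a..b} \<Longrightarrow> \<bar>y - x\<bar> < \<rho> \<Longrightarrow> g (of_real y) = of_real (f y)"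
proof -
  define g where "g z = (\<Sum>n. of_real (c n) * (z - of_real x) ^ n)" for z :: complex
  have sums_g: "(\<lambda>n. of_real (c n) * (z - of_real x) ^ n) sums g z" if "z \<in> ball (of_real x) \<rho>" for z
  proof -
    define d where "d = cmod (z - of_real x)"
    define t where "t = (d + \<rho>) / 2"
    have "d < \<rho>" "0 \<le> d"
      using that by (simp_all add: d_def dist_norm norm_minus_commute)
    then have t: "d < t" "t < \<rho>" "0 \<le> t"
      by (simp_all add: t_def)
    \<comment> \<open>The real series converges at a point of [a,b] at distance t from x (this needs
      2 * \<rho> \<le> b - a), hence on the complex disc of radius t.\<close>
    obtain y where y: "y \<in> {a..b}" "\<bar>y - x\<bar> = t"
    proof (cases "x + t \<le> b")
      case True then show ?thesis using x t by (intro that[of "x + t"]) auto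
    next
      case False then show ?thesis using x t \<rho> by (intro that[of "x - t"]) auto
    qed
    have "summable (\<lambda>n. c n * (y - x) ^ n)"
      using f[of y] y t \<rho> by (simp add: sums_summable)
    then have "summable (\<lambda>n. of_real (c n) * of_real (y - x) ^ n :: complex)"
      using summable_of_real by fastforce
    moreover have "norm (z - of_real x) < norm (complex_of_real (y - x))"
      unfolding norm_of_real using y t by (simp add: d_def)
    ultimately have "summable (\<lambda>n. of_real (c n) * (z - of_real x) ^ n)"
      by (rule powser_inside)
    then show ?thesis by (simp add: g_def summable_sums)
  qed
  have "g holomorphic_on ball (of_real x) \<rho>"
    using sums_g by (rule power_series_holomorphic)
  moreover have "g (of_real y) = of_real (f y)" if y: "y \<in> {a..b}" "\<bar>y - x\<bar> < \<rho>" for y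
  proof -
    have "of_real y \<in> ball (complex_of_real x) \<rho>"
      using y by (simp add: dist_real_def abs_minus_commute)
    moreover have "(\<lambda>n. of_real (c n) * (of_real y - of_real x) ^ n) sums (of_real (f y) :: complex)"
      using sums_of_real[OF f[OF y(1)]] y \<rho> by simp
    ultimately show ?thesis
      by (rule sums_unique2[OF sums_g])
  qed
  ultimately show ?thesis by (rule that)
qed

lemma holomorphic_agree_on_overlapping_real_discs:
  fixes g g' :: "complex \<Rightarrow> complex" and x x' :: real
  assumes "x < x'"
    and hol: "g holomorphic_on ball (of_real x) r" "g' holomorphic_on ball (of_real x') r'"
    and eq: "\<And>y. x \<le> y \<Longrightarrow> y \<le> x' \<Longrightarrow> y - x < r \<Longrightarrow> x' - y < r' \<Longrightarrow> g (of_real y) = g' (of_real y)"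
    and z: "z \<in> ball (of_real x) r" "z \<in> ball (of_real x') r'"
  shows "g z = g' z"
proof -
  let ?A = "ball (complex_of_real x) r \<inter> ball (of_real x') r'"
  have "dist (complex_of_real x) (of_real x') \<le> dist (complex_of_real x) z + dist z (of_real x')"
    by (rule dist_triangle)
  then have "x' - x < r + r'"
    using z \<open>x < x'\<close> by (simp add: dist_commute dist_real_def)
  have "0 < r" "0 < r'"
    using z zero_le_dist[of "of_real x" z] zero_le_dist[of "of_real x'" z] unfolding mem_ball by linarith+
  define lo where "lo = max x (x' - r')"
  define m where "m = (lo + min x' (x + r)) / 2"
  have "lo < m"
    using \<open>x' - x < r + r'\<close> \<open>x < x'\<close> \<open>0 < r\<close> \<open>0 < r'\<close> by (auto simp: lo_def m_def)
  have y: "x < y" "y \<le> x'" "y - x < r" "x' - y < r'" if "y \<in> {lo<..m}" for y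
    using that \<open>lo < m\<close> by (auto simp: lo_def m_def)
  have real_points: "of_real y \<in> ?A" "g (of_real y) - g' (of_real y) = 0" if "y \<in> {lo<..m}" for y
    using y[OF that] eq[of y] by (auto simp: dist_real_def)
  have "g z - g' z = 0"
  proof (rule analytic_continuation[where f = "\<lambda>w. g w - g' w" and S = ?A and w = z])
    show "(\<lambda>w. g w - g' w) holomorphic_on ?A"
      using hol by (intro holomorphic_intros) (auto elim: holomorphic_on_subset)
    show "connected ?A"
      by (intro convex_connected convex_Int convex_ball)
    show "of_real ` {lo<..m} \<subseteq> ?A" "of_real m \<in> ?A"
      using real_points(1) \<open>lo < m\<close> by auto
    show "complex_of_real m islimpt of_real ` {lo<..m}"
      using \<open>lo < m\<close> by (intro islimpt_isCont_image) (auto simp: eventually_at_filter)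
    show "g w - g' w = 0" if "w \<in> of_real ` {lo<..m}" for w
      using real_points(2) that by auto
  qed (use z in auto)
  then show ?thesis by simp
qed

lemma holomorphic_extension_from_local_extensions:
  fixes f :: "real \<Rightarrow> real" and g :: "real \<Rightarrow> complex \<Rightarrow> complex"
  assumes hol: "\<And>x. x \<in> {a..b} \<Longrightarrow> 0 < \<rho> x \<and> g x holomorphic_on ball (of_real x) (\<rho> x)"
    and ext: "\<And>x y. x \<in> {a..b} \<Longrightarrow> y \<in> {a..b} \<Longrightarrow> \<bar>y - x\<bar> < \<rho> x \<Longrightarrow> g x (of_real y) = of_real (f y)"
  obtains U F where "open U" "F holomorphic_on U"
    "\<And>y. y \<in> {a..b} \<Longrightarrow> complex_of_real y \<in> U \<and> F (of_real y) = of_real (f y)"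
proof -
  have agree_less: "g x z = g x' z"
    if "x \<in> {a..b}" "x' \<in> {a..b}" "x < x'" "z \<in> ball (of_real x) (\<rho> x)" "z \<in> ball (of_real x') (\<rho> x')"
    for x x' z
  proof (rule holomorphic_agree_on_overlapping_real_discs[of x x' "g x" "\<rho> x" "g x'" "\<rho> x'"])
    show "g x (of_real y) = g x' (of_real y)"
      if "x \<le> y" "y \<le> x'" "y - x < \<rho> x" "x' - y < \<rho> x'" for y
    proof -
      have "y \<in> {a..b}"
        using that \<open>x \<in> {a..b}\<close> \<open>x' \<in> {a..b}\<close> by simp
      with that show ?thesis
        using ext[of x y] ext[of x' y] \<open>x \<in> {a..b}\<close> \<open>x' \<in> {a..b}\<close> by simp
    qed
  qed (use that hol in simp_all)
  have agree: "g x z = g x' z"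
    if "x \<in> {a..b}" "x' \<in> {a..b}" "z \<in> ball (of_real x) (\<rho> x)" "z \<in> ball (of_real x') (\<rho> x')"
    for x x' z
  proof (cases x x' rule: linorder_cases)
    case less
    then show ?thesis using agree_less that by blast
  next
    case greater
    then show ?thesis using agree_less[of x' x z] that by simp
  qed simp
  define U where "U = (\<Union>x\<in>{a..b}. ball (complex_of_real x) (\<rho> x))"
  define F where "F z = g (SOME x. x \<in> {a..b} \<and> z \<in> ball (complex_of_real x) (\<rho> x)) z" for z
  have F: "F z = g x z" if "x \<in> {a..b}" "z \<in> ball (of_real x) (\<rho> x)" for x z
    unfolding F_def
  proof (rule someI2[of _ x])
    show "x \<in> {a..b} \<and> z \<in> ball (of_real x) (\<rho> x)"
      using that by simp
    show "g x' z = g x z" if "x' \<in> {a..b} \<and> z \<in> ball (of_real x') (\<rho> x')" for x'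
      using agree that \<open>x \<in> {a..b}\<close> \<open>z \<in> ball (of_real x) (\<rho> x)\<close> by blast
  qed
  have "F holomorphic_on U"
    unfolding U_def
  proof (rule holomorphic_on_UN_open)
    fix x assume "x \<in> {a..b}"
    show "F holomorphic_on ball (complex_of_real x) (\<rho> x)"
      by (rule holomorphic_transform[of "g x"]) (use hol F \<open>x \<in> {a..b}\<close> in simp_all)
  qed auto
  moreover have "complex_of_real y \<in> U \<and> F (of_real y) = of_real (f y)" if "y \<in> {a..b}" for y
  proof
    show "complex_of_real y \<in> U"
      unfolding U_def using that hol[of y] by (intro UN_I[of y]) auto
    show "F (of_real y) = of_real (f y)"
      using that hol[of y] F[of y] ext[of y y] by simp
  qed
  ultimately show ?thesis
    by (intro that[of U F]) (auto simp: U_def)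
qed

lemma real_analytic_on_interval_imp_holomorphic_extension:
  assumes "real_analytic_on f {a..b}" "a < b"
  obtains U F where "open U" "F holomorphic_on U"
    "\<And>y. y \<in> {a..b} \<Longrightarrow> complex_of_real y \<in> U \<and> F (of_real y) = of_real (f y)"
proof -
  have "\<forall>x\<in>{a..b}. \<exists>\<rho>>0. \<exists>g. g holomorphic_on ball (of_real x) \<rho> \<and>
      (\<forall>y\<in>{a..b}. \<bar>y - x\<bar> < \<rho> \<longrightarrow> g (of_real y) = of_real (f y))"
  proof
    fix x assume x: "x \<in> {a..b}"
    then obtain r c where "0 < r"
      and c: "\<forall>y\<in>{a..b}. \<bar>y - x\<bar> < r \<longrightarrow> (\<lambda>n. c n * (y - x) ^ n) sums f y"
      using assms(1) unfolding real_analytic_on_def by blast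
    define \<rho> where "\<rho> = min r ((b - a) / 2)"
    have \<rho>: "0 < \<rho>" "\<rho> \<le> r" "2 * \<rho> \<le> b - a"
      using \<open>0 < r\<close> assms(2) by (auto simp: \<rho>_def min_def)
    obtain g where "g holomorphic_on ball (of_real x) \<rho>"
      "\<And>y. y \<in> {a..b} \<Longrightarrow> \<bar>y - x\<bar> < \<rho> \<Longrightarrow> g (of_real y) = of_real (f y)"
      by (rule real_powser_holomorphic_extension[OF x \<rho>, of c f]) (use c in auto)
    with \<rho>(1) show "\<exists>\<rho>>0. \<exists>g. g holomorphic_on ball (of_real x) \<rho> \<and>
        (\<forall>y\<in>{a..b}. \<bar>y - x\<bar> < \<rho> \<longrightarrow> g (of_real y) = of_real (f y))"
      by blast
  qed
  from bchoice[OF this] obtain \<rho> where "\<forall>x\<in>{a..b}. 0 < \<rho> x \<and> (\<exists>g. g holomorphic_on ball (of_real x) (\<rho> x) \<and>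
      (\<forall>y\<in>{a..b}. \<bar>y - x\<bar> < \<rho> x \<longrightarrow> g (of_real y) = of_real (f y)))"
    by blast
  then have "\<forall>x\<in>{a..b}. \<exists>g. 0 < \<rho> x \<and> g holomorphic_on ball (of_real x) (\<rho> x) \<and>
      (\<forall>y\<in>{a..b}. \<bar>y - x\<bar> < \<rho> x \<longrightarrow> g (of_real y) = of_real (f y))"
    by blast
  from bchoice[OF this] obtain g where "\<And>x. x \<in> {a..b} \<Longrightarrow> 0 < \<rho> x \<and> g x holomorphic_on ball (of_real x) (\<rho> x) \<and>
      (\<forall>y\<in>{a..b}. \<bar>y - x\<bar> < \<rho> x \<longrightarrow> g x (of_real y) = of_real (f y))"
    by blast
  then show ?thesis
    using holomorphic_extension_from_local_extensions[of a b \<rho> g f] that by blast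
qed

lemma convex_open_neighbourhood_of_compact_convex:
  fixes S :: "'a::real_normed_vector set"
  assumes "compact S" "convex S" "open N" "S \<subseteq> N"
  obtains V where "open V" "convex V" "S \<subseteq> V" "V \<subseteq> N"
proof -
  obtain e where e: "e > 0" "(\<Union>x\<in>S. ball x e) \<subseteq> N"
    using compact_subset_open_imp_ball_epsilon_subset[OF assms(1,3,4)] .
  have "(\<Union>x\<in>S. ball x e) = (\<Union>x\<in>S. \<Union>y\<in>ball 0 e. {x + y})"
  proof (intro SUP_cong refl)
    show "ball x e = (\<Union>y\<in>ball 0 e. {x + y})" for x :: 'a
      by (auto simp: dist_norm intro!: bexI[of _ "_ - x"])
  qed
  then have "convex (\<Union>x\<in>S. ball x e)"
    using convex_sums[OF assms(2) convex_ball] by simp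
  then show ?thesis
    using that e by (meson UN_I centre_in_ball open_UN open_ball subsetI)
qed

lemma has_integral_complex_of_realD:
  fixes g :: "real \<Rightarrow> real"
  assumes "((\<lambda>x. complex_of_real (g x)) has_integral c) S"
  shows "(g has_integral Re c) S" "c = of_real (Re c)"
proof -
  show "(g has_integral Re c) S"
    using has_integral_linear[OF assms bounded_linear_Re] by (simp add: o_def)
  from has_integral_of_real[OF this] show "c = of_real (Re c)"
    using assms has_integral_unique by blast
qed

lemma holomorphic_primitive_along_interval:
  fixes p :: "complex \<Rightarrow> complex" and g :: "real \<Rightarrow> real"
  assumes V: "open V" "convex V" and p: "p holomorphic_on V"
    and g: "\<And>s. s \<in> {a..b} \<Longrightarrow> complex_of_real s \<in> V \<and> p (of_real s) = of_real (g s)"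
  obtains Q where "Q holomorphic_on V"
    "\<And>t. t \<in> {a..b} \<Longrightarrow> g integrable_on {a..t} \<and> Q (of_real t) = of_real (integral {a..t} g)"
proof -
  obtain P where P: "\<And>z. z \<in> V \<Longrightarrow> (P has_field_derivative p z) (at z within V)"
    using holomorphic_convex_primitive'[OF V(2,1) p] by blast
  define Q where "Q z = P z - P (of_real a)" for z
  have Q: "(Q has_field_derivative p z) (at z)" if "z \<in> V" for z
    using P[OF that] at_within_open[OF that V(1)] unfolding Q_def
    by (auto intro: derivative_eq_intros)
  have "Q holomorphic_on V"
    using Q V(1) by (auto simp: holomorphic_on_open)
  moreover have "g integrable_on {a..t} \<and> Q (of_real t) = of_real (integral {a..t} g)"
    if t: "t \<in> {a..b}" for t
  proof -
    have "((\<lambda>s. Q (of_real s)) has_vector_derivative of_real (g s)) (at s within {a..t})"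
      if "s \<in> {a..t}" for s
    proof -
      have s: "s \<in> {a..b}" using that t by simp
      have "((\<lambda>s. complex_of_real s) has_vector_derivative 1) (at s)"
        using has_vector_derivative_of_real[OF DERIV_ident] by simp
      from field_vector_diff_chain_at[OF this Q[OF g[OF s, THEN conjunct1]]]
      show ?thesis
        using g[OF s] by (simp add: o_def has_vector_derivative_at_within)
    qed
    then have "((\<lambda>s. complex_of_real (g s)) has_integral Q (of_real t) - Q (of_real a)) {a..t}"
      using t by (intro fundamental_theorem_of_calculus) auto
    then have "((\<lambda>s. complex_of_real (g s)) has_integral Q (of_real t)) {a..t}"
      by (simp add: Q_def)
    from has_integral_complex_of_realD[OF this] show ?thesis
      by (metis has_integral_integrable_integral)
  qed
  ultimately show ?thesis
    using that by blast
qed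

lemma weight_holomorphic_primitive:
  assumes h: "real_analytic_on h {0..lam}" and "lam > 0"
    and Psi: "\<And>x. x \<in> {0..lam} \<Longrightarrow> Psi beta h x \<noteq> 0"
  obtains V Q where "open V" "Q holomorphic_on V"
    "\<And>t. t \<in> {0..lam} \<Longrightarrow> complex_of_real t \<in> V \<and> weight beta h integrable_on {0..t} \<and>
        Q (of_real t) = of_real (integral {0..t} (weight beta h))"
proof -
  obtain U F where U: "open U" "F holomorphic_on U"
    and F: "\<And>y. y \<in> {0..lam} \<Longrightarrow> complex_of_real y \<in> U \<and> F (of_real y) = of_real (h y)"
    using real_analytic_on_interval_imp_holomorphic_extension[OF h \<open>lam > 0\<close>] by blast
  define \<Psi> where "\<Psi> z = 1 + complex_of_real beta * F z" for z
  have \<Psi>_real: "\<Psi> (of_real y) = of_real (Psi beta h y)" if "y \<in> {0..lam}" for y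
    using F[OF that] by (simp add: \<Psi>_def Psi_def)
  define N where "N = U \<inter> \<Psi> -` (- {0})"
  have "open N"
    unfolding N_def \<Psi>_def
    by (intro continuous_open_preimage holomorphic_on_imp_continuous_on holomorphic_intros U) auto
  moreover have "of_real ` {0..lam} \<subseteq> N"
    using F \<Psi>_real Psi by (auto simp: N_def)
  moreover have segment: "closed_segment 0 (complex_of_real lam) = of_real ` {0..lam}"
    using closed_segment_of_real[of 0 lam] \<open>lam > 0\<close> by (simp add: closed_segment_eq_real_ivl)
  have "compact (complex_of_real ` {0..lam})" "convex (complex_of_real ` {0..lam})"
    unfolding segment[symmetric] by (rule compact_segment convex_segment)+
  ultimately obtain V where V: "open V" "convex V" "of_real ` {0..lam} \<subseteq> V" "V \<subseteq> N"
    using convex_open_neighbourhood_of_compact_convex by blast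
  have hol_\<Psi>: "\<Psi> holomorphic_on V" and \<Psi>_nz: "\<And>z. z \<in> V \<Longrightarrow> \<Psi> z \<noteq> 0"
    using V(4) U(2) unfolding N_def \<Psi>_def by (auto intro!: holomorphic_intros elim: holomorphic_on_subset)
  obtain P where P: "P holomorphic_on V"
    "\<And>t. t \<in> {0..lam} \<Longrightarrow> P (of_real t) = of_real (integral {0..t} (\<lambda>\<xi>. \<xi> / Psi beta h \<xi>))"
  proof (rule holomorphic_primitive_along_interval[OF V(1,2), of "\<lambda>z. z / \<Psi> z" 0 lam])
    show "(\<lambda>z. z / \<Psi> z) holomorphic_on V"
      using hol_\<Psi> \<Psi>_nz by (intro holomorphic_intros)
  qed (use V(3) \<Psi>_real in auto)
  define W where "W z = exp (- 2 * P z) / \<Psi> z" for z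
  have W_hol: "W holomorphic_on V"
    unfolding W_def using P(1) hol_\<Psi> \<Psi>_nz by (intro holomorphic_intros)
  have W_real: "complex_of_real t \<in> V \<and> W (of_real t) = of_real (weight beta h t)"
    if "t \<in> {0..lam}" for t
    using that V(3) P(2)[OF that] \<Psi>_real[OF that]
    by (auto simp: W_def weight_def simp flip: exp_of_real)
  obtain Q where "Q holomorphic_on V"
    "\<And>t. t \<in> {0..lam} \<Longrightarrow> weight beta h integrable_on {0..t} \<and> Q (of_real t) = of_real (integral {0..t} (weight beta h))"
    using holomorphic_primitive_along_interval[OF V(1,2) W_hol W_real] by blast
  then show ?thesis
    using that V(1,3) by blast
qed

lemma tau_bounds:
  assumes "gam > 0" and w: "weight beta h integrable_on {0..lam}"
    and Psi: "\<And>x. x \<in> {0..lam} \<Longrightarrow> Psi beta h x > 0" and t: "t \<in> {0..lam}"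
  shows "0 \<le> tau lam gam beta h t \<and> tau lam gam beta h t \<le> 1"
proof -
  have w_nonneg: "weight beta h x \<ge> 0" if "x \<in> {0..lam}" for x
    using Psi[OF that] by (simp add: weight_def)
  define I where "I = integral {0..lam} (weight beta h)"
  define J where "J = integral {0..t} (weight beta h)"
  have wt: "weight beta h integrable_on {0..t}"
    by (rule integrable_subinterval_real[OF w]) (use t in auto)
  have "0 \<le> J"
    unfolding J_def using wt w_nonneg t by (intro integral_nonneg) auto
  moreover have "J \<le> I"
    unfolding I_def J_def using wt w w_nonneg t by (intro integral_subset_le) auto
  ultimately have "0 < 1 + gam * I"
    using \<open>gam > 0\<close> by (simp add: add_pos_nonneg)
  have "tau lam gam beta h t = gam / (1 + gam * I) * (1 / gam + J)"
    by (simp add: tau_def D_h_def I_def J_def divide_inverse)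
  also have "\<dots> = (1 + gam * J) / (1 + gam * I)"
    using \<open>gam > 0\<close> by (simp add: distrib_left add_divide_distrib)
  finally have tau_eq: "tau lam gam beta h t = (1 + gam * J) / (1 + gam * I)" .
  have "0 \<le> 1 + gam * J" "1 + gam * J \<le> 1 + gam * I"
    using \<open>gam > 0\<close> \<open>0 \<le> J\<close> \<open>J \<le> I\<close> by (simp_all add: mult_left_mono)
  then show ?thesis
    unfolding tau_eq using \<open>0 < 1 + gam * I\<close> by simp
qed

theorem theorem3p3:
  fixes lam gam beta :: real
  assumes "lam > 0" and "gam > 0" and "beta \<ge> 0"
  shows "tau lam gam beta ` K_set lam \<subseteq> K_set lam"
proof (rule image_subsetI)
  fix h assume "h \<in> K_set lam"
  then have h: "real_analytic_on h {0..lam}" and Psi: "\<And>x. x \<in> {0..lam} \<Longrightarrow> Psi beta h x > 0"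
    using \<open>beta \<ge> 0\<close> by (auto simp: K_set_def X_space_def Psi_def intro!: add_pos_nonneg)
  then have Psi_nonzero: "\<And>x. x \<in> {0..lam} \<Longrightarrow> Psi beta h x \<noteq> 0"
    by fastforce
  obtain V Q where V: "open V" "Q holomorphic_on V"
    and Q: "\<And>t. t \<in> {0..lam} \<Longrightarrow> complex_of_real t \<in> V \<and> weight beta h integrable_on {0..t} \<and>
        Q (of_real t) = of_real (integral {0..t} (weight beta h))"
    using weight_holomorphic_primitive[OF h \<open>lam > 0\<close> Psi_nonzero] by blast
  define D where "D = D_h lam gam beta h"
  have "real_analytic_on (tau lam gam beta h) {0..lam}"
  proof (rule real_analytic_on_if_holomorphic[OF V(1)])
    show "(\<lambda>z. of_real D * (1 / of_real gam + Q z)) holomorphic_on V"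
      using V(2) by (intro holomorphic_intros)
  qed (use Q in \<open>simp add: tau_def D_def\<close>)
  moreover have "0 \<le> tau lam gam beta h t \<and> tau lam gam beta h t \<le> 1" if "t \<in> {0..lam}" for t
    using tau_bounds[OF \<open>gam > 0\<close> _ Psi that] Q[of lam] \<open>lam > 0\<close> by simp
  ultimately show "tau lam gam beta h \<in> K_set lam"
    by (auto simp: K_set_def X_space_def intro!: exI[of _ 1])
qed

end
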